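(* Let $H$ be a monoid and let $A\subseteq H\setminus\{1_H\}$ be a non-empty finite set such that $a\nmid_H b$ for all $a,b\in A$ with $a\neq b$. Then the set $\{1_H\}\cup A$ is irreducible in $\mathcal{P}_{\mathrm{fin},1}(H)$.
   Context: For a monoid $H$, $x\mid_H y$ means $y\in HxH=\{uxv:u,v\in H\}$. $\mathcal{P}_{\mathrm{fin},1}(H)$ denotes the set of all non-empty finite subsets of $H$ containing $1_H$, a monoid under $XY=\{xy:x\in X,y\in Y\}$. In a monoid $M$: $x\mid_M y$ iff $y\in MxM$; $x,y$ are associated if each divides the other; $x$ properly divides $y$ if $x\mid_M y$ and $y\nmid_M x$. A unit-divisor is an element dividing $1_M$; other elements are non-unit-divisors. An irreducible of $M$ is a non-unit-divisor $a$ such that $a\neq xy$ for all non-unit-divisors $x,y$ properly dividing $a$. *)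

theory Defs
  imports Main
begin

definition hdvd :: "'a::monoid_mult \<Rightarrow> 'a \<Rightarrow> bool" where
  "hdvd x y \<longleftrightarrow> (\<exists>u v. y = u * x * v)"

definition set_mult :: "'a::monoid_mult set \<Rightarrow> 'a set \<Rightarrow> 'a set" where
  "set_mult X Y = {x * y | x y. x \<in> X \<and> y \<in> Y}"

definition Pfin1 :: "'a::monoid_mult set set" where
  "Pfin1 = {X. X \<noteq> {} \<and> finite X \<and> 1 \<in> X}"

definition pdvd :: "'a::monoid_mult set \<Rightarrow> 'a set \<Rightarrow> bool" where
  "pdvd X Y \<longleftrightarrow> (\<exists>U\<in>Pfin1. \<exists>V\<in>Pfin1. Y = set_mult (set_mult U X) V)"

definition pproper_dvd :: "'a::monoid_mult set \<Rightarrow> 'a set \<Rightarrow> bool" where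
  "pproper_dvd X Y \<longleftrightarrow> pdvd X Y \<and> \<not> pdvd Y X"

definition punit_divisor :: "'a::monoid_mult set \<Rightarrow> bool" where
  "punit_divisor X \<longleftrightarrow> pdvd X {1}"

definition pirreducible :: "'a::monoid_mult set \<Rightarrow> bool" where
  "pirreducible A \<longleftrightarrow> A \<in> Pfin1 \<and> \<not> punit_divisor A \<and>
     (\<forall>X\<in>Pfin1. \<forall>Y\<in>Pfin1.
        \<not> punit_divisor X \<and> \<not> punit_divisor Y \<and> pproper_dvd X A \<and> pproper_dvd Y A
        \<longrightarrow> A \<noteq> set_mult X Y)"

end

theory Submission
  imports Defs
begin

text \<open>Since every set in play contains 1, a factor of a product is a subset of it and
  \<open>{1}\<close> is the only unit-divisor. So in a factorisation \<open>{1} \<union> A = X Y\<close> into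
  non-unit-divisors, any \<open>x \<in> X - {1}\<close>, \<open>y \<in> Y - {1}\<close> lie in \<open>A\<close> with
  \<open>x y \<in> {1} \<union> A\<close>; as \<open>x y = 1\<close> forces \<open>x \<bar> y\<close> and \<open>x y \<in> A\<close> forces
  \<open>x, y \<bar> x y\<close>, the antichain condition gives \<open>x = y\<close>. Thus \<open>X = Y = {1, a}\<close>,
  the same argument puts \<open>a\<^sup>2\<close> into \<open>{1, a}\<close>, and \<open>{1} \<union> A = X\<close>, so \<open>X\<close> is not
  a proper divisor.\<close>

lemma set_mult_singleton_one_left [simp]: "set_mult {1} X = X"
  unfolding set_mult_def by auto

lemma set_mult_singleton_one_right [simp]: "set_mult X {1} = X"
  unfolding set_mult_def by auto

lemma subset_set_mult_left: "1 \<in> Y \<Longrightarrow> X \<subseteq> set_mult X Y"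
  unfolding set_mult_def by force

lemma subset_set_mult_right: "1 \<in> X \<Longrightarrow> Y \<subseteq> set_mult X Y"
  unfolding set_mult_def by force

lemma set_mult_pair_one_self: "set_mult {1, a} {1, a} = {1, a, a * a}"
  unfolding set_mult_def by (auto; metis mult_1_left mult_1_right)

lemma singleton_one_in_Pfin1: "{1} \<in> Pfin1"
  unfolding Pfin1_def by simp

lemma pdvd_refl: "pdvd X X"
  unfolding pdvd_def using singleton_one_in_Pfin1 by force

lemma pdvd_imp_subset:
  assumes "pdvd X Y"
  shows "X \<subseteq> Y"
proof -
  obtain U V where "U \<in> Pfin1" "V \<in> Pfin1" and Y: "Y = set_mult (set_mult U X) V"
    using assms unfolding pdvd_def by blast
  then have "1 \<in> U" "1 \<in> V"
    unfolding Pfin1_def by auto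
  then show ?thesis
    unfolding Y by (meson order_trans subset_set_mult_left subset_set_mult_right)
qed

lemma punit_divisor_iff:
  assumes "1 \<in> X"
  shows "punit_divisor X \<longleftrightarrow> X = {1}"
  using assms pdvd_imp_subset pdvd_refl unfolding punit_divisor_def by blast

lemma hdvd_mult_left: "hdvd x (x * y)"
  unfolding hdvd_def by (metis mult_1_left)

lemma hdvd_mult_right: "hdvd y (x * y)"
  unfolding hdvd_def by (metis mult_1_right)

lemma hdvd_if_mult_eq_one:
  assumes "x * y = 1"
  shows "hdvd x y"
proof -
  have "y = y * x * y"
    by (metis assms mult.assoc mult_1_right)
  then show ?thesis
    unfolding hdvd_def by blast
qed

context
  fixes A :: "'a::monoid_mult set"
  assumes antichain: "\<forall>a\<in>A. \<forall>b\<in>A. a \<noteq> b \<longrightarrow> \<not> hdvd a b"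
begin

lemma antichain_mult_mem_eq:
  assumes "x \<in> A" "y \<in> A" "x * y \<in> A"
  shows "x * y = x" "x * y = y"
  using antichain assms hdvd_mult_left hdvd_mult_right by metis+

lemma antichain_mult_mem_insert_one_imp_eq:
  assumes "x \<in> A" "y \<in> A" "x * y \<in> insert 1 A"
  shows "x = y"
  using assms antichain hdvd_if_mult_eq_one antichain_mult_mem_eq by (metis insertE)

lemma antichain_square_mem_insert_one:
  assumes "a \<in> A" "a * a \<in> insert 1 A"
  shows "a * a \<in> {1, a}"
  using assms antichain_mult_mem_eq by blast

lemma factors_eq_pair:
  assumes B: "set_mult X Y = insert 1 A"
    and "1 \<in> X" "1 \<in> Y" "X \<noteq> {1}" "Y \<noteq> {1}"
  shows "\<exists>a\<in>A. X = {1, a} \<and> Y = {1, a}"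
proof -
  have XB: "X \<subseteq> insert 1 A" and YB: "Y \<subseteq> insert 1 A"
    using B \<open>1 \<in> X\<close> \<open>1 \<in> Y\<close> subset_set_mult_left subset_set_mult_right by blast+
  have eq: "x = y" if "x \<in> X" "x \<noteq> 1" "y \<in> Y" "y \<noteq> 1" for x y
  proof (rule antichain_mult_mem_insert_one_imp_eq)
    show "x \<in> A" "y \<in> A"
      using that XB YB by auto
    show "x * y \<in> insert 1 A"
      using that B unfolding set_mult_def by blast
  qed
  obtain a where "a \<in> X" "a \<noteq> 1"
    using \<open>1 \<in> X\<close> \<open>X \<noteq> {1}\<close> by blast
  obtain b where "b \<in> Y" "b \<noteq> 1"
    using \<open>1 \<in> Y\<close> \<open>Y \<noteq> {1}\<close> by blast
  have "X = {1, a}" "Y = {1, a}"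
    using eq \<open>a \<in> X\<close> \<open>a \<noteq> 1\<close> \<open>b \<in> Y\<close> \<open>b \<noteq> 1\<close> \<open>1 \<in> X\<close> \<open>1 \<in> Y\<close> by blast+
  moreover have "a \<in> A"
    using XB \<open>a \<in> X\<close> \<open>a \<noteq> 1\<close> by blast
  ultimately show ?thesis
    by blast
qed

lemma left_factor_eq:
  assumes B: "set_mult X Y = insert 1 A"
    and "1 \<in> X" "1 \<in> Y" "X \<noteq> {1}" "Y \<noteq> {1}"
  shows "X = insert 1 A"
proof -
  obtain a where "a \<in> A" and X: "X = {1, a}" and Y: "Y = {1, a}"
    using factors_eq_pair assms by blast
  then have B_pair: "insert 1 A = {1, a, a * a}"
    using B unfolding X Y set_mult_pair_one_self by simp
  then have "a * a \<in> {1, a}"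
    using antichain_square_mem_insert_one \<open>a \<in> A\<close> by simp
  then show ?thesis
    using B_pair X by auto
qed

end

theorem proposition2p4:
  fixes A :: "'a::monoid_mult set"
  assumes "finite A" and "A \<noteq> {}" and "1 \<notin> A"
    and "\<forall>a\<in>A. \<forall>b\<in>A. a \<noteq> b \<longrightarrow> \<not> hdvd a b"
  shows "pirreducible (insert 1 A)"
proof -
  have B_Pfin1: "insert 1 A \<in> Pfin1"
    using \<open>finite A\<close> unfolding Pfin1_def by simp
  have "insert 1 A \<noteq> {1}"
    using \<open>A \<noteq> {}\<close> \<open>1 \<notin> A\<close> by blast
  then have B_not_unit: "\<not> punit_divisor (insert 1 A)"
    using punit_divisor_iff by blast
  have "\<not> pproper_dvd X (insert 1 A)"
    if "X \<in> Pfin1" "Y \<in> Pfin1" "\<not> punit_divisor X" "\<not> punit_divisor Y"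
      and "insert 1 A = set_mult X Y" for X Y
  proof -
    have "1 \<in> X" "1 \<in> Y"
      using that unfolding Pfin1_def by auto
    then have "X = insert 1 A"
      using that left_factor_eq[OF assms(4)] punit_divisor_iff by metis
    then show ?thesis
      unfolding pproper_dvd_def using pdvd_refl by blast
  qed
  then show ?thesis
    unfolding pirreducible_def using B_Pfin1 B_not_unit by blast
qed

end
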